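(* Let $\lambda$ be a regular uncountable cardinal, $\kappa<\lambda$, and $\mathcal{C}=\langle\mathcal{C}_\alpha\mid\alpha<\lambda\rangle$ a coherent sequence of length $\lambda$ and width $<\kappa$. Suppose there is an unbounded $A\subseteq\lambda$ such that for every $\alpha\in A$ there is $C\in\mathcal{C}_\alpha$ with $A\cap\alpha\subseteq C$. Then $\mathcal{C}$ has a thread.
   Context: For a set of ordinals $A$, $\mathrm{acc}(A)$ is the set of $\beta<\sup\{\alpha+1\mid\alpha\in A\}$ with $\beta=\sup(A\cap\beta)$. A coherent sequence of length $\lambda$ and width $<\eta$ is $\mathcal{C}=\langle\mathcal{C}_\alpha\mid\alpha<\lambda\rangle$ where each $\mathcal{C}_\alpha$ is a nonempty set of fewer than $\eta$ closed unbounded subsets of $\alpha$ (for successor $\alpha=\beta+1$, $\mathcal{C}_\alpha=\{\{\beta\}\}$), such that for all $\beta<\lambda$, $C\in\mathcal{C}_\beta$ and $\alpha\in\mathrm{acc}(C)$, $C\cap\alpha\in\mathcal{C}_\alpha$. A thread through $\mathcal{C}$ is a club $D\subseteq\lambda$ with $D\cap\alpha\in\mathcal{C}_\alpha$ for all $\alpha\in\mathrm{acc}(D)$. *)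

theory Defs
  imports Main
begin

text \<open>The regular cardinal lambda is represented by a cardinal well-order r
  (Card_order r); ordinals below lambda are the elements of Field r, and the
  ordinal alpha is identified with its strict initial segment underS r alpha.\<close>

definition lt :: "'a rel \<Rightarrow> 'a \<Rightarrow> 'a \<Rightarrow> bool" where
  "lt r x y \<equiv> x \<noteq> y \<and> (x, y) \<in> r"

definition is_sup_below :: "'a rel \<Rightarrow> 'a set \<Rightarrow> 'a \<Rightarrow> bool" where
  "is_sup_below r A \<beta> \<equiv> \<forall>\<gamma>. lt r \<gamma> \<beta> \<longrightarrow> (\<exists>x\<in>A. lt r \<gamma> x \<and> lt r x \<beta>)"

text \<open>acc(A) = {beta < sup{alpha+1 | alpha \<in> A}. beta = sup(A \<inter> beta)};
  beta < sup{alpha+1 | alpha \<in> A} iff beta \<le> alpha for some alpha \<in> A.\<close>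
definition acc :: "'a rel \<Rightarrow> 'a set \<Rightarrow> 'a set" where
  "acc r A \<equiv> {\<beta> \<in> Field r. (\<exists>\<alpha>\<in>A. (\<beta>, \<alpha>) \<in> r) \<and> is_sup_below r A \<beta>}"

definition club_below :: "'a rel \<Rightarrow> 'a \<Rightarrow> 'a set \<Rightarrow> bool" where
  "club_below r \<alpha> C \<equiv> C \<subseteq> underS r \<alpha>
     \<and> (\<forall>\<gamma>\<in>underS r \<alpha>. \<exists>x\<in>C. lt r \<gamma> x)
     \<and> (\<forall>\<beta>\<in>underS r \<alpha>. (\<exists>x. lt r x \<beta>) \<and> is_sup_below r C \<beta> \<longrightarrow> \<beta> \<in> C)"

definition club_in :: "'a rel \<Rightarrow> 'a set \<Rightarrow> bool" where
  "club_in r D \<equiv> D \<subseteq> Field r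
     \<and> (\<forall>\<gamma>\<in>Field r. \<exists>x\<in>D. lt r \<gamma> x)
     \<and> (\<forall>\<beta>\<in>Field r. (\<exists>x. lt r x \<beta>) \<and> is_sup_below r D \<beta> \<longrightarrow> \<beta> \<in> D)"

definition is_succ :: "'a rel \<Rightarrow> 'a \<Rightarrow> 'a \<Rightarrow> bool" where
  "is_succ r \<beta> \<alpha> \<equiv> lt r \<beta> \<alpha> \<and> \<not> (\<exists>\<gamma>. lt r \<beta> \<gamma> \<and> lt r \<gamma> \<alpha>)"

definition coherent_seq :: "'a rel \<Rightarrow> 'b rel \<Rightarrow> ('a \<Rightarrow> 'a set set) \<Rightarrow> bool" where
  "coherent_seq r \<eta> \<C> \<equiv>
     (\<forall>\<alpha>\<in>Field r. \<C> \<alpha> \<noteq> {} \<and> (card_of (\<C> \<alpha>), \<eta>) \<in> ordLess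
        \<and> (\<forall>\<beta>. is_succ r \<beta> \<alpha> \<longrightarrow> \<C> \<alpha> = {{\<beta>}})
        \<and> ((\<nexists>\<beta>. is_succ r \<beta> \<alpha>) \<longrightarrow> (\<forall>C\<in>\<C> \<alpha>. club_below r \<alpha> C)))
   \<and> (\<forall>\<beta>\<in>Field r. \<forall>C\<in>\<C> \<beta>. \<forall>\<alpha>\<in>acc r C. C \<inter> underS r \<alpha> \<in> \<C> \<alpha>)"

definition thread :: "'a rel \<Rightarrow> ('a \<Rightarrow> 'a set set) \<Rightarrow> 'a set \<Rightarrow> bool" where
  "thread r \<C> D \<equiv> club_in r D \<and> (\<forall>\<alpha>\<in>acc r D. D \<inter> underS r \<alpha> \<in> \<C> \<alpha>)"

end

theory Submission
  imports Defs
begin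

(*
  Fix for each alpha in A a set cover(alpha) in C_alpha covering A below alpha. For every limit
  point beta of A, beta is then an accumulation point of cover(alpha) for all alpha > beta in A,
  so by coherence the traces cover(alpha) \<inter> beta lie in C_beta. Call E a trace at beta if
  E = cover(alpha) \<inter> beta for cofinally many alpha in A. By regularity of lambda (pigeonhole over
  the fewer than kappa members of C_beta) every trace at beta extends to traces at all higher
  levels, so the traces form a tree of height lambda with levels of size < kappa.

  If some node has a unique extension at every higher level, these extensions cohere and their
  union is a thread. Otherwise every node splits below some level; bounding these levels by a
  function s and passing to the closure points of s, a set S of such points of size
  max(kappa, aleph_0) lying below one closure point L yields pairwise distinct pairs of traces at
  L, one for each element of S, so |S| \<le> |traces at L|^2 < kappa: a contradiction.
*)

unbundle cardinal_syntax

lemma underS_iff_lt: "x \<in> underS r a \<longleftrightarrow> lt r x a"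
  unfolding underS_def lt_def by blast

lemma lt_imp_le: "lt r a b \<Longrightarrow> (a, b) \<in> r"
  unfolding lt_def by blast

lemma lt_Field1: "lt r a b \<Longrightarrow> a \<in> Field r"
  unfolding lt_def by (blast intro: FieldI1)

lemma cofinal_iff_lt: "cofinal X r \<longleftrightarrow> (\<forall>\<gamma>\<in>Field r. \<exists>x\<in>X. lt r \<gamma> x)"
  unfolding cofinal_def lt_def by blast

lemma cofinal_mono: "cofinal X r \<Longrightarrow> X \<subseteq> Y \<Longrightarrow> cofinal Y r"
  unfolding cofinal_def by blast

lemma Int_eq_restrict: "A \<inter> X = B \<inter> X \<Longrightarrow> Y \<subseteq> X \<Longrightarrow> A \<inter> Y = B \<inter> Y"
  by blast

lemma card_le_square_infinite:
  assumes "\<not> finite S" "|S| \<le>o |T \<times> T|"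
  shows "|S| \<le>o |T|"
proof -
  have "\<not> finite (T \<times> T)"
    using assms card_of_ordLeq_finite by blast
  then have "\<not> finite T"
    by auto
  then show ?thesis
    using assms(2) card_of_Times_same_infinite ordLeq_ordIso_trans by blast
qed

lemma acc_Field: "\<beta> \<in> acc r X \<Longrightarrow> \<beta> \<in> Field r"
  unfolding acc_def by blast

lemma acc_is_sup_below: "\<beta> \<in> acc r X \<Longrightarrow> is_sup_below r X \<beta>"
  unfolding acc_def by blast

lemma acc_not_succ: "\<beta> \<in> acc r X \<Longrightarrow> \<not> is_succ r \<gamma> \<beta>"
  unfolding acc_def is_sup_below_def is_succ_def by blast

lemma coherent_seq_at:
  assumes "coherent_seq r \<eta> \<C>" "\<alpha> \<in> Field r"
  shows coherent_seq_card: "|\<C> \<alpha>| <o \<eta>"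
    and coherent_seq_succ: "is_succ r \<beta> \<alpha> \<Longrightarrow> \<C> \<alpha> = {{\<beta>}}"
    and coherent_seq_club: "\<nexists>\<beta>. is_succ r \<beta> \<alpha> \<Longrightarrow> C \<in> \<C> \<alpha> \<Longrightarrow> club_below r \<alpha> C"
  using bspec[OF conjunct1[OF assms(1)[unfolded coherent_seq_def]] assms(2)] by simp_all

lemma coherent_seq_restrict:
  assumes "coherent_seq r \<eta> \<C>" "\<beta> \<in> Field r" "C \<in> \<C> \<beta>" "\<alpha> \<in> acc r C"
  shows "C \<inter> underS r \<alpha> \<in> \<C> \<alpha>"
  using conjunct2[OF assms(1)[unfolded coherent_seq_def]] assms(2-4) by blast

lemma club_below_subset: "club_below r \<beta> C \<Longrightarrow> C \<subseteq> underS r \<beta>"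
  unfolding club_below_def by (rule conjunct1)

lemma club_below_unbounded:
  assumes "club_below r \<beta> C" "lt r \<gamma> \<beta>"
  shows "\<exists>x\<in>C. lt r \<gamma> x"
  using assms(1) underS_iff_lt[THEN iffD2, OF assms(2)] unfolding club_below_def by blast

lemma club_below_closed:
  assumes "club_below r \<beta> C" "lt r \<alpha> \<beta>" "\<exists>x. lt r x \<alpha>" "is_sup_below r C \<alpha>"
  shows "\<alpha> \<in> C"
  using assms(1,3,4) underS_iff_lt[THEN iffD2, OF assms(2)] unfolding club_below_def by blast

context wo_rel
begin

lemma le_trans: "(a, b) \<in> r \<Longrightarrow> (b, c) \<in> r \<Longrightarrow> (a, c) \<in> r"
  using TRANS by (rule transD)

lemma le_antisym: "(a, b) \<in> r \<Longrightarrow> (b, a) \<in> r \<Longrightarrow> a = b"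
  using ANTISYM by (rule antisymD)

lemma lt_trans: "lt r a b \<Longrightarrow> lt r b c \<Longrightarrow> lt r a c"
  unfolding lt_def by (blast intro: le_trans dest: le_antisym)

lemma lt_le_trans: "lt r a b \<Longrightarrow> (b, c) \<in> r \<Longrightarrow> lt r a c"
  unfolding lt_def by (blast intro: le_trans dest: le_antisym)

lemma le_lt_trans: "(a, b) \<in> r \<Longrightarrow> lt r b c \<Longrightarrow> lt r a c"
  unfolding lt_def by (blast intro: le_trans dest: le_antisym)

lemma not_lt_imp_le: "a \<in> Field r \<Longrightarrow> b \<in> Field r \<Longrightarrow> \<not> lt r a b \<Longrightarrow> (b, a) \<in> r"
  unfolding lt_def using TOTALS by blast

lemma not_le_imp_lt: "a \<in> Field r \<Longrightarrow> b \<in> Field r \<Longrightarrow> (a, b) \<notin> r \<Longrightarrow> lt r b a"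
  unfolding lt_def using TOTALS by blast

lemma lt_imp_not_le: "lt r a b \<Longrightarrow> (b, a) \<notin> r"
  unfolding lt_def by (blast dest: le_antisym)

lemma lt_total: "a \<in> Field r \<Longrightarrow> b \<in> Field r \<Longrightarrow> a \<noteq> b \<Longrightarrow> lt r a b \<or> lt r b a"
  unfolding lt_def using TOTALS by blast

lemma underS_mono: "(a, b) \<in> r \<Longrightarrow> underS a \<subseteq> underS b"
  by (rule underS_incr[OF TRANS ANTISYM])

lemma cofinal_above:
  assumes X: "cofinal X r" and \<beta>: "\<beta> \<in> Field r"
  shows "cofinal {x \<in> X. lt r \<beta> x} r"
  unfolding cofinal_iff_lt
proof
  fix \<gamma> assume "\<gamma> \<in> Field r"
  then obtain x where "x \<in> X" "lt r (max2 \<gamma> \<beta>) x"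
    using X \<beta> max2_greater unfolding cofinal_iff_lt by (blast intro: FieldI2)
  then show "\<exists>x\<in>{x \<in> X. lt r \<beta> x}. lt r \<gamma> x"
    using max2_greater[OF \<open>\<gamma> \<in> Field r\<close> \<beta>] le_lt_trans by blast
qed

lemma is_sup_below_transfer:
  assumes "is_sup_below r X \<beta>" "lt r \<beta> \<alpha>" "X \<inter> underS \<alpha> \<subseteq> Y"
  shows "is_sup_below r Y \<beta>"
  unfolding is_sup_below_def
proof (intro allI impI)
  fix \<gamma> assume "lt r \<gamma> \<beta>"
  then obtain x where "x \<in> X" "lt r \<gamma> x" "lt r x \<beta>"
    using assms(1) unfolding is_sup_below_def by blast
  moreover have "x \<in> underS \<alpha>"
    using \<open>lt r x \<beta>\<close> assms(2) lt_trans underS_iff_lt by metis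
  ultimately show "\<exists>y\<in>Y. lt r \<gamma> y \<and> lt r y \<beta>"
    using assms(3) by blast
qed

lemma acc_transfer:
  assumes "\<beta> \<in> acc r X" "lt r \<beta> \<alpha>" "X \<inter> underS \<alpha> \<subseteq> Y" "\<exists>y\<in>Y. (\<beta>, y) \<in> r"
  shows "\<beta> \<in> acc r Y"
  using assms(4) acc_Field[OF assms(1)]
    is_sup_below_transfer[OF acc_is_sup_below[OF assms(1)] assms(2,3)]
  unfolding acc_def by blast

lemma inj_on_if_lt_neq:
  assumes S: "S \<subseteq> Field r" and neq: "\<And>a b. a \<in> S \<Longrightarrow> b \<in> S \<Longrightarrow> lt r a b \<Longrightarrow> p a \<noteq> p b"
  shows "inj_on p S"
proof (rule inj_onI, rule ccontr)
  fix a b assume ab: "a \<in> S" "b \<in> S" "p a = p b" "a \<noteq> b"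
  have "a \<in> Field r" "b \<in> Field r"
    using ab(1,2) S by blast+
  then have "lt r a b \<or> lt r b a"
    using ab(4) by (rule lt_total)
  then show False
    using neq[OF ab(1,2)] neq[OF ab(2,1)] ab(3) by auto
qed

lemma union_chain_restrict:
  assumes B: "B \<subseteq> Field r" "\<beta> \<in> B"
    and e_sub: "\<And>\<beta>. \<beta> \<in> B \<Longrightarrow> e \<beta> \<subseteq> underS \<beta>"
    and e_coh: "\<And>\<beta> \<beta>'. \<beta> \<in> B \<Longrightarrow> \<beta>' \<in> B \<Longrightarrow> (\<beta>, \<beta>') \<in> r \<Longrightarrow> e \<beta>' \<inter> underS \<beta> = e \<beta>"
  shows "\<Union>(e ` B) \<inter> underS \<beta> = e \<beta>"
proof
  show "e \<beta> \<subseteq> \<Union>(e ` B) \<inter> underS \<beta>"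
    using e_sub B(2) by blast
  show "\<Union>(e ` B) \<inter> underS \<beta> \<subseteq> e \<beta>"
  proof
    fix d assume d: "d \<in> \<Union>(e ` B) \<inter> underS \<beta>"
    then obtain \<beta>' where \<beta>': "\<beta>' \<in> B" "d \<in> e \<beta>'"
      by blast
    show "d \<in> e \<beta>"
    proof (cases "(\<beta>', \<beta>) \<in> r")
      case True
      then show ?thesis
        using e_coh[OF \<beta>'(1) B(2)] \<beta>'(2) by blast
    next
      case False
      have "\<beta> \<in> Field r" "\<beta>' \<in> Field r"
        using B \<beta>'(1) by blast+
      then have "(\<beta>, \<beta>') \<in> r"
        using False TOTALS by blast
      then show ?thesis
        using e_coh[OF B(2) \<beta>'(1)] \<beta>'(2) d by blast
    qed
  qed
qed

lemma chain_union_club: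
  assumes B: "B \<subseteq> Field r" "cofinal B r"
    and e_club: "\<And>\<beta>. \<beta> \<in> B \<Longrightarrow> club_below r \<beta> (e \<beta>)"
    and e_coh: "\<And>\<beta> \<beta>'. \<beta> \<in> B \<Longrightarrow> \<beta>' \<in> B \<Longrightarrow> (\<beta>, \<beta>') \<in> r \<Longrightarrow> e \<beta>' \<inter> underS \<beta> = e \<beta>"
  shows "club_in r (\<Union>(e ` B))"
proof -
  define D where "D = \<Union>(e ` B)"
  have D_restrict: "D \<inter> underS \<beta> = e \<beta>" if "\<beta> \<in> B" for \<beta>
    unfolding D_def by (rule union_chain_restrict[OF B(1) that club_below_subset[OF e_club] e_coh])
  have above: "\<exists>\<beta>\<in>B. lt r \<alpha> \<beta>" if "\<alpha> \<in> Field r" for \<alpha>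
    using B(2) that unfolding cofinal_iff_lt by blast
  have "D \<subseteq> Field r"
    unfolding D_def
    by (rule UN_least, rule subset_trans[OF club_below_subset[OF e_club] Order_Relation.underS_Field])
  moreover have "\<exists>x\<in>D. lt r \<gamma> x" if \<gamma>: "\<gamma> \<in> Field r" for \<gamma>
  proof -
    obtain \<beta> where "\<beta> \<in> B" "lt r \<gamma> \<beta>"
      using above[OF \<gamma>] by blast
    then obtain x where "x \<in> e \<beta>" "lt r \<gamma> x"
      using club_below_unbounded[OF e_club] by blast
    then show ?thesis
      using D_restrict[OF \<open>\<beta> \<in> B\<close>] by blast
  qed
  moreover have "\<beta> \<in> D" if \<beta>: "\<beta> \<in> Field r" "\<exists>x. lt r x \<beta>" "is_sup_below r D \<beta>" for \<beta>
  proof -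
    obtain \<beta>' where \<beta>': "\<beta>' \<in> B" "lt r \<beta> \<beta>'"
      using above[OF \<beta>(1)] by blast
    have "is_sup_below r (e \<beta>') \<beta>"
      using is_sup_below_transfer[OF \<beta>(3) \<beta>'(2) equalityD1[OF D_restrict[OF \<beta>'(1)]]] .
    then have "\<beta> \<in> e \<beta>'"
      using club_below_closed[OF e_club[OF \<beta>'(1)] \<beta>'(2) \<beta>(2)] by blast
    then show ?thesis
      using D_restrict[OF \<beta>'(1)] by blast
  qed
  ultimately show ?thesis
    unfolding club_in_def D_def[symmetric] by blast
qed

lemma chain_union_thread:
  assumes coherent: "coherent_seq r \<eta> \<C>"
    and B: "B \<subseteq> Field r" "cofinal B r"
    and e_in: "\<And>\<beta>. \<beta> \<in> B \<Longrightarrow> e \<beta> \<in> \<C> \<beta>"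
    and e_club: "\<And>\<beta>. \<beta> \<in> B \<Longrightarrow> club_below r \<beta> (e \<beta>)"
    and e_coh: "\<And>\<beta> \<beta>'. \<beta> \<in> B \<Longrightarrow> \<beta>' \<in> B \<Longrightarrow> (\<beta>, \<beta>') \<in> r \<Longrightarrow> e \<beta>' \<inter> underS \<beta> = e \<beta>"
  shows "thread r \<C> (\<Union>(e ` B))"
proof -
  define D where "D = \<Union>(e ` B)"
  have "D \<inter> underS \<alpha> \<in> \<C> \<alpha>" if \<alpha>: "\<alpha> \<in> acc r D" for \<alpha>
  proof -
    obtain \<beta>' where \<beta>': "\<beta>' \<in> B" "lt r \<alpha> \<beta>'"
      using B(2) acc_Field[OF \<alpha>] unfolding cofinal_iff_lt by blast
    have D_restrict: "D \<inter> underS \<beta>' = e \<beta>'"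
      unfolding D_def by (rule union_chain_restrict[OF B(1) \<beta>'(1) club_below_subset[OF e_club] e_coh])
    obtain x where "x \<in> e \<beta>'" "lt r \<alpha> x"
      using club_below_unbounded[OF e_club[OF \<beta>'(1)] \<beta>'(2)] by blast
    then have "\<exists>x\<in>e \<beta>'. (\<alpha>, x) \<in> r"
      by (blast dest: lt_imp_le)
    then have "\<alpha> \<in> acc r (e \<beta>')"
      by (rule acc_transfer[OF \<alpha> \<beta>'(2) equalityD1[OF D_restrict]])
    then have "e \<beta>' \<inter> underS \<alpha> \<in> \<C> \<alpha>"
      by (rule coherent_seq_restrict[OF coherent subsetD[OF B(1) \<beta>'(1)] e_in[OF \<beta>'(1)]])
    moreover have "e \<beta>' \<inter> underS \<alpha> = D \<inter> underS \<alpha>"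
      using D_restrict underS_mono[OF lt_imp_le[OF \<beta>'(2)]] by blast
    ultimately show ?thesis
      by simp
  qed
  then show ?thesis
    using chain_union_club[OF B e_club e_coh] unfolding thread_def D_def by blast
qed

end

definition closed_under :: "'a rel \<Rightarrow> ('a \<Rightarrow> 'a) \<Rightarrow> 'a \<Rightarrow> bool" where
  "closed_under r g \<delta> \<longleftrightarrow> (\<forall>\<beta>. lt r \<beta> \<delta> \<longrightarrow> lt r (g \<beta>) \<delta>)"

locale regular_cardinal =
  fixes r :: "'a rel"
  assumes Card_order: "Card_order r" and regular: "regularCard r"

sublocale regular_cardinal \<subseteq> wo_rel
  using Card_order by (rule Card_order_wo_rel)

context regular_cardinal
begin

lemma cofinal_card: "K \<subseteq> Field r \<Longrightarrow> cofinal K r \<Longrightarrow> |K| =o r"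
  using regular unfolding regularCard_def by blast

lemma small_set_bounded:
  assumes "K \<subseteq> Field r" "|K| <o r"
  shows "\<exists>u\<in>Field r. \<forall>k\<in>K. (k, u) \<in> r"
proof -
  have "\<not> cofinal K r"
  proof
    assume "cofinal K r"
    then have "|K| =o r"
      using assms(1) by (rule cofinal_card[rotated])
    then show False
      using assms(2) not_ordLess_ordIso by blast
  qed
  then obtain u where "u \<in> Field r" "\<forall>k\<in>K. \<not> lt r u k"
    unfolding cofinal_iff_lt by blast
  then show ?thesis
    using assms(1) not_lt_imp_le by blast
qed

lemma small_image_bounded:
  assumes "f ` X \<subseteq> Field r" "|X| <o r"
  shows "\<exists>u\<in>Field r. \<forall>x\<in>X. (f x, u) \<in> r"
proof -
  have "|f ` X| <o r"
    using card_of_image assms(2) by (rule ordLeq_ordLess_trans)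
  then show ?thesis
    using small_set_bounded[OF assms(1)] by blast
qed

lemma pigeonhole_cofinal:
  assumes X: "X \<subseteq> Field r" "cofinal X r" and f: "f ` X \<subseteq> I" and I: "|I| <o r"
  shows "\<exists>i\<in>I. cofinal {x \<in> X. f x = i} r"
proof (rule ccontr)
  assume "\<not> ?thesis"
  then have "\<forall>i\<in>I. \<exists>\<gamma>. \<gamma> \<in> Field r \<and> (\<forall>x\<in>X. f x = i \<longrightarrow> \<not> lt r \<gamma> x)"
    unfolding cofinal_iff_lt by blast
  from bchoice[OF this] obtain b where b: "\<forall>i\<in>I. b i \<in> Field r \<and> (\<forall>x\<in>X. f x = i \<longrightarrow> \<not> lt r (b i) x)"
    by blast
  then obtain u where u: "u \<in> Field r" "\<forall>i\<in>I. (b i, u) \<in> r"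
    using small_image_bounded[of b I] I by blast
  then obtain x where "x \<in> X" "lt r u x"
    using X(2) unfolding cofinal_iff_lt by blast
  moreover have "f x \<in> I"
    using \<open>x \<in> X\<close> f by blast
  ultimately show False
    using b u le_lt_trans by blast
qed

lemma bounded_subset_of_card:
  assumes B: "B \<subseteq> Field r" "cofinal B r" and I: "|I| <o r"
  shows "\<exists>S\<subseteq>B. \<exists>L\<in>B. |I| \<le>o |S| \<and> (\<forall>\<delta>\<in>S. lt r \<delta> L)"
proof -
  have "|I| <o |B|"
    using I ordIso_symmetric[OF cofinal_card[OF B]] by (rule ordLess_ordIso_trans)
  then have "|I| \<le>o |B|"
    by (rule ordLess_imp_ordLeq)
  then obtain h where h: "inj_on h I" "h ` I \<subseteq> B"
    unfolding card_of_ordLeq[symmetric] by blast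
  have "|h ` I| <o r"
    using card_of_image I by (rule ordLeq_ordLess_trans)
  then obtain u where u: "u \<in> Field r" "\<forall>\<delta>\<in>h ` I. (\<delta>, u) \<in> r"
    using small_set_bounded[OF subset_trans[OF h(2) B(1)]] by blast
  then obtain L where L: "L \<in> B" "lt r u L"
    using B(2) unfolding cofinal_iff_lt by blast
  have "\<forall>\<delta>\<in>h ` I. lt r \<delta> L"
  proof
    fix \<delta> assume "\<delta> \<in> h ` I"
    then show "lt r \<delta> L"
      using u(2) L(2) by (blast intro: le_lt_trans)
  qed
  moreover have "|I| \<le>o |h ` I|"
    unfolding card_of_ordLeq[symmetric] using h(1) by blast
  ultimately show ?thesis
    using h(2) L(1) by blast
qed

lemma nat_seq_least_upper_bound:
  fixes f :: "nat \<Rightarrow> 'a"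
  assumes uncountable: "natLeq <o r" and f: "range f \<subseteq> Field r"
  shows "\<exists>\<delta>\<in>Field r. (\<forall>n. (f n, \<delta>) \<in> r) \<and> (\<forall>\<beta>. lt r \<beta> \<delta> \<longrightarrow> (\<exists>n. lt r \<beta> (f n)))"
proof -
  define UB where "UB = {u \<in> Field r. \<forall>n. (f n, u) \<in> r}"
  have UB: "UB \<subseteq> Field r"
    unfolding UB_def by blast
  have "|UNIV :: nat set| <o r"
    using card_of_nat uncountable by (rule ordIso_ordLess_trans)
  then obtain u where "u \<in> Field r" "\<forall>n. (f n, u) \<in> r"
    using small_image_bounded[OF f] by blast
  then have "UB \<noteq> {}"
    unfolding UB_def by blast
  then have in_UB: "minim UB \<in> UB"
    by (rule minim_in[OF UB])
  have "\<exists>n. lt r \<beta> (f n)" if \<beta>: "lt r \<beta> (minim UB)" for \<beta>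
  proof (rule ccontr)
    assume "\<nexists>n. lt r \<beta> (f n)"
    then have "(f n, \<beta>) \<in> r" for n
      using lt_Field1[OF \<beta>] f not_lt_imp_le by blast
    then have "\<beta> \<in> UB"
      using lt_Field1[OF \<beta>] unfolding UB_def by blast
    then show False
      using minim_least[OF UB] lt_imp_not_le[OF \<beta>] by blast
  qed
  then show ?thesis
    using in_UB unfolding UB_def by blast
qed

lemma exists_above_image:
  assumes A: "cofinal A r" and g: "g ` Field r \<subseteq> Field r" and y: "y \<in> Field r"
  shows "\<exists>x\<in>A. lt r y x \<and> (\<forall>\<beta>. (\<beta>, y) \<in> r \<longrightarrow> lt r (g \<beta>) x)"
proof -
  have "g ` underS y \<subseteq> Field r"
    using image_mono[OF Order_Relation.underS_Field] g by (rule subset_trans)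
  then obtain u where u: "u \<in> Field r" "\<forall>\<beta>\<in>underS y. (g \<beta>, u) \<in> r"
    using small_image_bounded card_of_underS[OF Card_order y] by blast
  have gy: "g y \<in> Field r"
    using g y by (rule image_subset_iff[THEN iffD1, rule_format])
  define c where "c = max2 u (g y)"
  have c: "(u, c) \<in> r" "(g y, c) \<in> r"
    using max2_greater[OF u(1) gy] unfolding c_def by blast+
  obtain x where x: "x \<in> A" "lt r y x" "lt r c x"
    using cofinal_above[OF A y] FieldI2[OF c(1)] unfolding cofinal_iff_lt by blast
  have "lt r (g \<beta>) x" if "(\<beta>, y) \<in> r" for \<beta>
  proof (cases "\<beta> = y")
    case True
    then show ?thesis
      using le_lt_trans[OF c(2) x(3)] by simp
  next
    case False
    then have "(g \<beta>, u) \<in> r"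
      using that u(2) unfolding underS_def by blast
    then show ?thesis
      using le_lt_trans[OF le_trans[OF _ c(1)] x(3)] by blast
  qed
  then show ?thesis
    using x by blast
qed

lemma jump_sequence:
  assumes A: "A \<subseteq> Field r" "cofinal A r" and g: "g ` Field r \<subseteq> Field r" and \<gamma>: "\<gamma> \<in> Field r"
  shows "\<exists>f. f 0 = \<gamma> \<and> range f \<subseteq> Field r \<and> (\<forall>n. f (Suc n) \<in> A \<and> lt r (f n) (f (Suc n))
    \<and> (\<forall>\<beta>. (\<beta>, f n) \<in> r \<longrightarrow> lt r (g \<beta>) (f (Suc n))))"
proof -
  have "\<forall>y\<in>Field r. \<exists>x. x \<in> A \<and> lt r y x \<and> (\<forall>\<beta>. (\<beta>, y) \<in> r \<longrightarrow> lt r (g \<beta>) x)"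
    using exists_above_image[OF A(2) g] by blast
  from bchoice[OF this] obtain jump where jump: "\<forall>y\<in>Field r. jump y \<in> A \<and> lt r y (jump y)
      \<and> (\<forall>\<beta>. (\<beta>, y) \<in> r \<longrightarrow> lt r (g \<beta>) (jump y))"
    by blast
  define f where "f n = (jump ^^ n) \<gamma>" for n
  have f_Suc: "f (Suc n) = jump (f n)" for n
    by (simp add: f_def)
  have f_Field: "f n \<in> Field r" for n
  proof (induction n)
    case 0
    then show ?case
      using \<gamma> by (simp add: f_def)
  next
    case (Suc n)
    then show ?case
      using jump A(1) unfolding f_Suc by blast
  qed
  have "f (Suc n) \<in> A \<and> lt r (f n) (f (Suc n)) \<and> (\<forall>\<beta>. (\<beta>, f n) \<in> r \<longrightarrow> lt r (g \<beta>) (f (Suc n)))" for n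
    using jump f_Field[of n] unfolding f_Suc by blast
  moreover have "f 0 = \<gamma>"
    by (simp add: f_def)
  ultimately show ?thesis
    using f_Field by (intro exI[of _ f]) blast
qed

lemma closure_points_cofinal:
  assumes uncountable: "natLeq <o r"
    and A: "A \<subseteq> Field r" "cofinal A r" and g: "g ` Field r \<subseteq> Field r"
  shows "cofinal {\<delta> \<in> acc r A. closed_under r g \<delta>} r"
  unfolding cofinal_iff_lt
proof
  fix \<gamma> assume \<gamma>: "\<gamma> \<in> Field r"
  obtain f where f: "f 0 = \<gamma>" "range f \<subseteq> Field r" "\<And>n. f (Suc n) \<in> A"
      "\<And>n. lt r (f n) (f (Suc n))" "\<And>n \<beta>. (\<beta>, f n) \<in> r \<Longrightarrow> lt r (g \<beta>) (f (Suc n))"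
    using jump_sequence[OF A g \<gamma>] by blast
  obtain \<delta> where \<delta>: "\<delta> \<in> Field r" "\<And>n. (f n, \<delta>) \<in> r" "\<And>\<beta>. lt r \<beta> \<delta> \<Longrightarrow> \<exists>n. lt r \<beta> (f n)"
    using nat_seq_least_upper_bound[OF uncountable f(2)] by blast
  have f_lt_\<delta>: "lt r (f n) \<delta>" for n
    by (rule lt_le_trans[OF f(4) \<delta>(2)])
  have "is_sup_below r A \<delta>"
    unfolding is_sup_below_def
  proof (intro allI impI)
    fix \<beta> assume "lt r \<beta> \<delta>"
    then obtain n where "lt r \<beta> (f n)"
      using \<delta>(3) by blast
    then have "lt r \<beta> (f (Suc n))"
      using f(4) by (rule lt_trans)
    then show "\<exists>x\<in>A. lt r \<beta> x \<and> lt r x \<delta>"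
      using f(3) f_lt_\<delta> by blast
  qed
  moreover have "closed_under r g \<delta>"
    unfolding closed_under_def
  proof (intro allI impI)
    fix \<beta> assume "lt r \<beta> \<delta>"
    then obtain n where "lt r \<beta> (f n)"
      using \<delta>(3) by blast
    then have "lt r (g \<beta>) (f (Suc n))"
      by (rule f(5)[OF lt_imp_le])
    then show "lt r (g \<beta>) \<delta>"
      using f_lt_\<delta> by (rule lt_trans)
  qed
  moreover have "\<exists>\<alpha>\<in>A. (\<delta>, \<alpha>) \<in> r"
    using A(2) \<delta>(1) unfolding cofinal_iff_lt by (blast dest: lt_imp_le)
  ultimately have "\<delta> \<in> {\<delta> \<in> acc r A. closed_under r g \<delta>}"
    using \<delta>(1) unfolding acc_def by blast
  moreover have "lt r \<gamma> \<delta>"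
    using f_lt_\<delta>[of 0] f(1) by simp
  ultimately show "\<exists>\<delta>\<in>{\<delta> \<in> acc r A. closed_under r g \<delta>}. lt r \<gamma> \<delta>"
    by blast
qed

end

locale covered_coherent_seq = regular_cardinal r for r :: "'a rel" +
  fixes \<kappa> :: "'b rel" and \<C> :: "'a \<Rightarrow> 'a set set" and A :: "'a set"
  assumes uncountable: "natLeq <o r"
    and Card_order_\<kappa>: "Card_order \<kappa>" and \<kappa>_less: "\<kappa> <o r"
    and coherent: "coherent_seq r \<kappa> \<C>"
    and A_Field: "A \<subseteq> Field r" and A_cofinal: "cofinal A r"
    and A_covered: "\<And>\<alpha>. \<alpha> \<in> A \<Longrightarrow> \<exists>C\<in>\<C> \<alpha>. A \<inter> underS \<alpha> \<subseteq> C"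
begin

definition cover :: "'a \<Rightarrow> 'a set" where
  "cover \<alpha> = (SOME C. C \<in> \<C> \<alpha> \<and> A \<inter> underS \<alpha> \<subseteq> C)"

definition traces :: "'a \<Rightarrow> 'a set set" where
  "traces \<beta> = {E. cofinal {\<alpha> \<in> A. lt r \<beta> \<alpha> \<and> cover \<alpha> \<inter> underS \<beta> = E} r}"

definition splits :: "'a \<Rightarrow> 'a set \<Rightarrow> 'a \<Rightarrow> bool" where
  "splits \<beta> x \<beta>' \<longleftrightarrow> (\<exists>y\<in>traces \<beta>'. \<exists>z\<in>traces \<beta>'. y \<inter> underS \<beta> = x \<and> z \<inter> underS \<beta> = x \<and> y \<noteq> z)"

lemma cover: "\<alpha> \<in> A \<Longrightarrow> cover \<alpha> \<in> \<C> \<alpha> \<and> A \<inter> underS \<alpha> \<subseteq> cover \<alpha>"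
  unfolding cover_def by (rule someI2_bex[OF A_covered]) blast

lemma card_level_less: "\<alpha> \<in> Field r \<Longrightarrow> |\<C> \<alpha>| <o r"
  using coherent_seq_card[OF coherent] \<kappa>_less by (rule ordLess_transitive)

lemma acc_cofinal: "cofinal (acc r A) r"
  by (rule cofinal_mono[OF closure_points_cofinal[OF uncountable A_Field A_cofinal, of id]]) auto

lemma acc_imp_acc_cover:
  assumes \<beta>: "\<beta> \<in> acc r A" and \<alpha>: "\<alpha> \<in> A" "lt r \<beta> \<alpha>"
  shows "\<beta> \<in> acc r (cover \<alpha>)"
proof -
  have \<alpha>F: "\<alpha> \<in> Field r" "\<beta> \<in> Field r"
    using \<alpha>(1) A_Field acc_Field[OF \<beta>] by blast+
  have "\<exists>y\<in>cover \<alpha>. (\<beta>, y) \<in> r"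
  proof (cases "\<exists>\<beta>'. is_succ r \<beta>' \<alpha>")
    case True
    then obtain \<beta>' where succ: "is_succ r \<beta>' \<alpha>"
      by blast
    then have "cover \<alpha> = {\<beta>'}"
      using cover[OF \<alpha>(1)] coherent_seq_succ[OF coherent \<alpha>F(1)] by blast
    moreover have "(\<beta>, \<beta>') \<in> r"
    proof (rule ccontr)
      assume not_le: "(\<beta>, \<beta>') \<notin> r"
      have "\<beta>' \<in> Field r"
        using succ unfolding is_succ_def by (blast intro: lt_Field1)
      then have "lt r \<beta>' \<beta>"
        using not_le by (rule not_le_imp_lt[OF \<alpha>F(2)])
      then show False
        using succ \<alpha>(2) unfolding is_succ_def by blast
    qed
    ultimately show ?thesis
      by blast
  next
    case False
    then have "club_below r \<alpha> (cover \<alpha>)"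
      using coherent_seq_club[OF coherent \<alpha>F(1)] cover[OF \<alpha>(1)] by blast
    then obtain x where "x \<in> cover \<alpha>" "lt r \<beta> x"
      using \<alpha>(2) by (blast dest: club_below_unbounded)
    then show ?thesis
      by (blast dest: lt_imp_le)
  qed
  then show ?thesis
    using acc_transfer[OF \<beta> \<alpha>(2)] cover[OF \<alpha>(1)] by blast
qed

lemma cover_restrict_in: "\<beta> \<in> acc r A \<Longrightarrow> \<alpha> \<in> A \<Longrightarrow> lt r \<beta> \<alpha> \<Longrightarrow> cover \<alpha> \<inter> underS \<beta> \<in> \<C> \<beta>"
  using coherent_seq_restrict[OF coherent] A_Field cover acc_imp_acc_cover by blast

lemma traces_subset: "\<beta> \<in> acc r A \<Longrightarrow> traces \<beta> \<subseteq> \<C> \<beta>"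
proof
  fix E assume \<beta>: "\<beta> \<in> acc r A" and "E \<in> traces \<beta>"
  then obtain \<alpha> where "\<alpha> \<in> A" "lt r \<beta> \<alpha>" "cover \<alpha> \<inter> underS \<beta> = E"
    using acc_Field[OF \<beta>] unfolding traces_def cofinal_iff_lt by blast
  then show "E \<in> \<C> \<beta>"
    using cover_restrict_in[OF \<beta>] by blast
qed

lemma card_traces_less: "\<beta> \<in> acc r A \<Longrightarrow> |traces \<beta>| <o \<kappa>"
  using card_of_mono1[OF traces_subset] coherent_seq_card[OF coherent acc_Field]
  by (rule ordLeq_ordLess_trans)

lemma traces_restrict:
  assumes "(\<beta>, \<beta>') \<in> r" "E \<in> traces \<beta>'"
  shows "E \<inter> underS \<beta> \<in> traces \<beta>"
proof -
  have "{\<alpha> \<in> A. lt r \<beta>' \<alpha> \<and> cover \<alpha> \<inter> underS \<beta>' = E}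
      \<subseteq> {\<alpha> \<in> A. lt r \<beta> \<alpha> \<and> cover \<alpha> \<inter> underS \<beta> = E \<inter> underS \<beta>}"
    using underS_mono[OF assms(1)] le_lt_trans[OF assms(1)] by blast
  then show ?thesis
    using assms(2) cofinal_mono unfolding traces_def by blast
qed

lemma trace_of_cofinal_subset:
  assumes \<beta>: "\<beta> \<in> acc r A" and X: "X \<subseteq> A" "cofinal X r" "\<And>\<alpha>. \<alpha> \<in> X \<Longrightarrow> lt r \<beta> \<alpha>"
  shows "\<exists>E\<in>traces \<beta>. cofinal {\<alpha> \<in> X. cover \<alpha> \<inter> underS \<beta> = E} r"
proof -
  have "(\<lambda>\<alpha>. cover \<alpha> \<inter> underS \<beta>) ` X \<subseteq> \<C> \<beta>"
    using cover_restrict_in[OF \<beta>] X by blast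
  then obtain E where "cofinal {\<alpha> \<in> X. cover \<alpha> \<inter> underS \<beta> = E} r"
    using pigeonhole_cofinal[OF subset_trans[OF X(1) A_Field] X(2)]
      card_level_less[OF acc_Field[OF \<beta>]] by blast
  moreover have "{\<alpha> \<in> X. cover \<alpha> \<inter> underS \<beta> = E} \<subseteq> {\<alpha> \<in> A. lt r \<beta> \<alpha> \<and> cover \<alpha> \<inter> underS \<beta> = E}"
    using X(1,3) by blast
  ultimately show ?thesis
    using cofinal_mono unfolding traces_def by blast
qed

lemma traces_nonempty: "\<beta> \<in> acc r A \<Longrightarrow> traces \<beta> \<noteq> {}"
  using trace_of_cofinal_subset[of \<beta> "{\<alpha> \<in> A. lt r \<beta> \<alpha>}"]
    cofinal_above[OF A_cofinal acc_Field] by blast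

lemma traces_extend:
  assumes \<beta>: "\<beta> \<in> acc r A" "\<beta>' \<in> acc r A" "(\<beta>, \<beta>') \<in> r" and x: "x \<in> traces \<beta>"
  shows "\<exists>y\<in>traces \<beta>'. y \<inter> underS \<beta> = x"
proof -
  define X where "X = {\<alpha> \<in> A. lt r \<beta>' \<alpha> \<and> cover \<alpha> \<inter> underS \<beta> = x}"
  have "X = {\<alpha> \<in> {\<alpha> \<in> A. lt r \<beta> \<alpha> \<and> cover \<alpha> \<inter> underS \<beta> = x}. lt r \<beta>' \<alpha>}"
    unfolding X_def using le_lt_trans[OF \<beta>(3)] by blast
  moreover have "cofinal {\<alpha> \<in> {\<alpha> \<in> A. lt r \<beta> \<alpha> \<and> cover \<alpha> \<inter> underS \<beta> = x}. lt r \<beta>' \<alpha>} r"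
    by (rule cofinal_above[OF x[unfolded traces_def, simplified] acc_Field[OF \<beta>(2)]])
  ultimately have "cofinal X r"
    by simp
  moreover have "X \<subseteq> A" "\<And>\<alpha>. \<alpha> \<in> X \<Longrightarrow> lt r \<beta>' \<alpha>"
    unfolding X_def by blast+
  ultimately obtain y where y: "y \<in> traces \<beta>'" "cofinal {\<alpha> \<in> X. cover \<alpha> \<inter> underS \<beta>' = y} r"
    using trace_of_cofinal_subset[OF \<beta>(2)] by blast
  then obtain \<alpha> where "\<alpha> \<in> X" "cover \<alpha> \<inter> underS \<beta>' = y"
    using acc_Field[OF \<beta>(2)] unfolding cofinal_iff_lt by blast
  then have "y \<inter> underS \<beta> = x"
    using underS_mono[OF \<beta>(3)] unfolding X_def by blast
  then show ?thesis
    using y(1) by blast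
qed

lemma thread_of_non_splitting_node:
  assumes \<beta>0: "\<beta>0 \<in> acc r A" and x0: "x0 \<in> traces \<beta>0"
    and no_split: "\<And>\<beta>. \<beta> \<in> acc r A \<Longrightarrow> (\<beta>0, \<beta>) \<in> r \<Longrightarrow> \<not> splits \<beta>0 x0 \<beta>"
  shows "\<exists>D. thread r \<C> D"
proof -
  define B where "B = {\<beta> \<in> acc r A. (\<beta>0, \<beta>) \<in> r}"
  define e where "e \<beta> = (THE y. y \<in> traces \<beta> \<and> y \<inter> underS \<beta>0 = x0)" for \<beta>
  have unique: "\<exists>!y. y \<in> traces \<beta> \<and> y \<inter> underS \<beta>0 = x0" if "\<beta> \<in> B" for \<beta>
    using traces_extend[OF \<beta>0 _ _ x0] no_split that unfolding B_def splits_def by blast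
  have e: "e \<beta> \<in> traces \<beta>" "e \<beta> \<inter> underS \<beta>0 = x0" if "\<beta> \<in> B" for \<beta>
    using theI'[OF unique[OF that]] unfolding e_def by blast+
  have e_eq: "e \<beta> = y" if "\<beta> \<in> B" "y \<in> traces \<beta>" "y \<inter> underS \<beta>0 = x0" for \<beta> y
    unfolding e_def using that(2,3) by (intro the1_equality[OF unique[OF that(1)]]) blast
  have B_acc: "\<beta> \<in> acc r A" if "\<beta> \<in> B" for \<beta>
    using that unfolding B_def by blast
  have B_Field: "B \<subseteq> Field r"
    using B_acc by (blast dest: acc_Field)
  have B_cofinal: "cofinal B r"
  proof (rule cofinal_mono)
    show "cofinal {\<beta> \<in> acc r A. lt r \<beta>0 \<beta>} r"
      by (rule cofinal_above[OF acc_cofinal acc_Field[OF \<beta>0]])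
    show "{\<beta> \<in> acc r A. lt r \<beta>0 \<beta>} \<subseteq> B"
      unfolding B_def by (blast dest: lt_imp_le)
  qed
  have e_in: "e \<beta> \<in> \<C> \<beta>" if "\<beta> \<in> B" for \<beta>
    using traces_subset[OF B_acc[OF that]] e(1)[OF that] by blast
  have e_club: "club_below r \<beta> (e \<beta>)" if "\<beta> \<in> B" for \<beta>
  proof -
    have "\<nexists>\<gamma>. is_succ r \<gamma> \<beta>"
      using acc_not_succ[OF B_acc[OF that]] by blast
    then show ?thesis
      using coherent_seq_club[OF coherent acc_Field[OF B_acc[OF that]]] e_in[OF that] by blast
  qed
  have e_coh: "e \<beta>' \<inter> underS \<beta> = e \<beta>" if "\<beta> \<in> B" "\<beta>' \<in> B" "(\<beta>, \<beta>') \<in> r" for \<beta> \<beta>'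
  proof (rule e_eq[symmetric, OF that(1)])
    show "e \<beta>' \<inter> underS \<beta> \<in> traces \<beta>"
      using traces_restrict[OF that(3) e(1)[OF that(2)]] .
    have "underS \<beta>0 \<subseteq> underS \<beta>"
      using that(1) underS_mono unfolding B_def by blast
    then show "e \<beta>' \<inter> underS \<beta> \<inter> underS \<beta>0 = x0"
      using e(2)[OF that(2)] by blast
  qed
  show ?thesis
    using chain_union_thread[OF coherent B_Field B_cofinal e_in e_club e_coh] by blast
qed

definition bounds_splits :: "('a \<Rightarrow> 'a) \<Rightarrow> bool" where
  "bounds_splits s \<longleftrightarrow>
    (\<forall>\<beta>\<in>acc r A. \<forall>x\<in>traces \<beta>. \<exists>\<beta>'\<in>acc r A. (\<beta>, \<beta>') \<in> r \<and> (\<beta>', s \<beta>) \<in> r \<and> splits \<beta> x \<beta>')"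

lemma exists_bounds_splits:
  assumes all_split: "\<And>\<beta> x. \<beta> \<in> acc r A \<Longrightarrow> x \<in> traces \<beta> \<Longrightarrow> \<exists>\<beta>'\<in>acc r A. (\<beta>, \<beta>') \<in> r \<and> splits \<beta> x \<beta>'"
  shows "\<exists>s. s ` Field r \<subseteq> Field r \<and> bounds_splits s"
proof -
  have "\<exists>u\<in>Field r. \<beta> \<in> acc r A \<longrightarrow>
      (\<forall>x\<in>traces \<beta>. \<exists>\<beta>'\<in>acc r A. (\<beta>, \<beta>') \<in> r \<and> (\<beta>', u) \<in> r \<and> splits \<beta> x \<beta>')"
    if \<beta>: "\<beta> \<in> Field r" for \<beta>
  proof (cases "\<beta> \<in> acc r A")
    case True
    then have "\<forall>x\<in>traces \<beta>. \<exists>\<beta>'. \<beta>' \<in> acc r A \<and> (\<beta>, \<beta>') \<in> r \<and> splits \<beta> x \<beta>'"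
      using all_split by blast
    from bchoice[OF this] obtain sp where sp:
      "\<forall>x\<in>traces \<beta>. sp x \<in> acc r A \<and> (\<beta>, sp x) \<in> r \<and> splits \<beta> x (sp x)"
      by blast
    have "|traces \<beta>| <o r"
      using card_traces_less[OF True] \<kappa>_less by (rule ordLess_transitive)
    moreover have "sp ` traces \<beta> \<subseteq> Field r"
      using sp by (intro image_subsetI) (blast dest: acc_Field)
    ultimately obtain u where "u \<in> Field r" "\<forall>x\<in>traces \<beta>. (sp x, u) \<in> r"
      using small_image_bounded by blast
    then show ?thesis
      using sp by blast
  next
    case False
    then show ?thesis
      using \<beta> by blast
  qed
  then have "\<forall>\<beta>\<in>Field r. \<exists>u. u \<in> Field r \<and> (\<beta> \<in> acc r A \<longrightarrow>
      (\<forall>x\<in>traces \<beta>. \<exists>\<beta>'\<in>acc r A. (\<beta>, \<beta>') \<in> r \<and> (\<beta>', u) \<in> r \<and> splits \<beta> x \<beta>'))"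
    by blast
  from bchoice[OF this] obtain s where s: "\<forall>\<beta>\<in>Field r. s \<beta> \<in> Field r \<and> (\<beta> \<in> acc r A \<longrightarrow>
      (\<forall>x\<in>traces \<beta>. \<exists>\<beta>'\<in>acc r A. (\<beta>, \<beta>') \<in> r \<and> (\<beta>', s \<beta>) \<in> r \<and> splits \<beta> x \<beta>'))"
    by blast
  then have "s ` Field r \<subseteq> Field r"
    by (intro image_subsetI) blast
  then show ?thesis
    using s unfolding bounds_splits_def by (blast dest: acc_Field)
qed

lemma splitting_pair:
  assumes s: "bounds_splits s" and \<beta>: "\<beta> \<in> acc r A" and L: "L \<in> acc r A" "(s \<beta>, L) \<in> r"
  shows "\<exists>y\<in>traces L. \<exists>z\<in>traces L. y \<inter> underS \<beta> = z \<inter> underS \<beta> \<and> y \<inter> underS (s \<beta>) \<noteq> z \<inter> underS (s \<beta>)"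
proof -
  obtain x where "x \<in> traces \<beta>"
    using traces_nonempty[OF \<beta>] by blast
  then obtain \<beta>' where \<beta>': "\<beta>' \<in> acc r A" "(\<beta>, \<beta>') \<in> r" "(\<beta>', s \<beta>) \<in> r" "splits \<beta> x \<beta>'"
    using s \<beta> unfolding bounds_splits_def by blast
  then obtain y z where yz: "y \<in> traces \<beta>'" "z \<in> traces \<beta>'" "y \<inter> underS \<beta> = x" "z \<inter> underS \<beta> = x" "y \<noteq> z"
    unfolding splits_def by blast
  have \<beta>'_L: "(\<beta>', L) \<in> r"
    using \<beta>'(3) L(2) by (rule le_trans)
  obtain y' where y': "y' \<in> traces L" "y' \<inter> underS \<beta>' = y"
    using traces_extend[OF \<beta>'(1) L(1) \<beta>'_L yz(1)] by blast
  obtain z' where z': "z' \<in> traces L" "z' \<inter> underS \<beta>' = z"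
    using traces_extend[OF \<beta>'(1) L(1) \<beta>'_L yz(2)] by blast
  have "y' \<inter> underS \<beta> = z' \<inter> underS \<beta>"
    using y'(2) z'(2) yz(3,4) underS_mono[OF \<beta>'(2)] by blast
  moreover have "y' \<inter> underS (s \<beta>) \<noteq> z' \<inter> underS (s \<beta>)"
  proof
    assume "y' \<inter> underS (s \<beta>) = z' \<inter> underS (s \<beta>)"
    then have "y' \<inter> underS \<beta>' = z' \<inter> underS \<beta>'"
      using underS_mono[OF \<beta>'(3)] by blast
    then show False
      using y'(2) z'(2) yz(5) by simp
  qed
  ultimately show ?thesis
    using y'(1) z'(1) by blast
qed

lemma card_le_square_traces:
  assumes s: "bounds_splits s" and L: "L \<in> acc r A" "closed_under r s L"
    and S: "S \<subseteq> acc r A" "\<And>\<delta>. \<delta> \<in> S \<Longrightarrow> closed_under r s \<delta>" "\<And>\<delta>. \<delta> \<in> S \<Longrightarrow> lt r \<delta> L"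
  shows "|S| \<le>o |traces L \<times> traces L|"
proof -
  define P where "P \<beta> q \<longleftrightarrow> q \<in> traces L \<times> traces L \<and> fst q \<inter> underS \<beta> = snd q \<inter> underS \<beta>
      \<and> fst q \<inter> underS (s \<beta>) \<noteq> snd q \<inter> underS (s \<beta>)" for \<beta> q
  have "\<forall>\<beta>\<in>S. \<exists>q. P \<beta> q"
  proof
    fix \<beta> assume \<beta>: "\<beta> \<in> S"
    have "lt r (s \<beta>) L"
      using L(2) S(3)[OF \<beta>] unfolding closed_under_def by blast
    then obtain y z where "y \<in> traces L" "z \<in> traces L" "y \<inter> underS \<beta> = z \<inter> underS \<beta>"
        "y \<inter> underS (s \<beta>) \<noteq> z \<inter> underS (s \<beta>)"
      using splitting_pair[OF s subsetD[OF S(1) \<beta>] L(1) lt_imp_le] by blast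
    then have "P \<beta> (y, z)"
      unfolding P_def by simp
    then show "\<exists>q. P \<beta> q" ..
  qed
  from bchoice[OF this] obtain p where p: "\<forall>\<beta>\<in>S. P \<beta> (p \<beta>)"
    by blast
  have p_ne: "p \<beta>1 \<noteq> p \<beta>2" if "\<beta>1 \<in> S" "\<beta>2 \<in> S" "lt r \<beta>1 \<beta>2" for \<beta>1 \<beta>2
  proof
    assume eq: "p \<beta>1 = p \<beta>2"
    have "lt r (s \<beta>1) \<beta>2"
      using S(2)[OF that(2)] that(3) unfolding closed_under_def by blast
    then have "underS (s \<beta>1) \<subseteq> underS \<beta>2"
      by (rule underS_mono[OF lt_imp_le])
    moreover have "fst (p \<beta>2) \<inter> underS \<beta>2 = snd (p \<beta>2) \<inter> underS \<beta>2"
      using p that(2) unfolding P_def by blast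
    ultimately have "fst (p \<beta>1) \<inter> underS (s \<beta>1) = snd (p \<beta>1) \<inter> underS (s \<beta>1)"
      unfolding eq by (rule Int_eq_restrict[rotated])
    then show False
      using p that(1) unfolding P_def by blast
  qed
  have "inj_on p S"
    using p_ne S(1) by (intro inj_on_if_lt_neq) (blast dest: acc_Field)+
  moreover have "p ` S \<subseteq> traces L \<times> traces L"
    using p unfolding P_def by (intro image_subsetI) blast
  ultimately show ?thesis
    unfolding card_of_ordLeq[symmetric] by blast
qed

lemma card_Field_Plus_nat_less: "|Field \<kappa> <+> (UNIV :: nat set)| <o r"
proof -
  have "natLeq <o |Field r|"
    using uncountable ordIso_symmetric[OF card_of_Field_ordIso[OF Card_order]] by (rule ordLess_ordIso_trans)
  then have "\<not> finite (Field r)"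
    using infinite_iff_natLeq_ordLeq[of "Field r"] ordLess_imp_ordLeq by blast
  moreover have "|Field \<kappa>| <o r"
    using card_of_Field_ordIso[OF Card_order_\<kappa>] \<kappa>_less by (rule ordIso_ordLess_trans)
  moreover have "|UNIV :: nat set| <o r"
    using card_of_nat uncountable by (rule ordIso_ordLess_trans)
  ultimately show ?thesis
    using Card_order by (intro card_of_Plus_ordLess_infinite_Field)
qed

lemma not_splitting_everywhere:
  assumes all_split: "\<And>\<beta> x. \<beta> \<in> acc r A \<Longrightarrow> x \<in> traces \<beta> \<Longrightarrow> \<exists>\<beta>'\<in>acc r A. (\<beta>, \<beta>') \<in> r \<and> splits \<beta> x \<beta>'"
  shows False
proof -
  obtain s where s_Field: "s ` Field r \<subseteq> Field r" and s: "bounds_splits s"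
    using exists_bounds_splits[OF all_split] by blast
  define B where "B = {\<delta> \<in> acc r A. closed_under r s \<delta>}"
  have B_cofinal: "cofinal B r"
    unfolding B_def by (rule closure_points_cofinal[OF uncountable A_Field A_cofinal s_Field])
  have B_Field: "B \<subseteq> Field r"
    unfolding B_def by (blast dest: acc_Field)
  \<comment> \<open>kappa may be finite; the summand nat makes S infinite\<close>
  obtain S L where S: "S \<subseteq> B" "|Field \<kappa> <+> (UNIV :: nat set)| \<le>o |S|"
      and L: "L \<in> B" "\<And>\<delta>. \<delta> \<in> S \<Longrightarrow> lt r \<delta> L"
    using bounded_subset_of_card[OF B_Field B_cofinal card_Field_Plus_nat_less] by blast
  have "|S| \<le>o |traces L \<times> traces L|"
  proof (rule card_le_square_traces[OF s])
    show "L \<in> acc r A" "closed_under r s L" "S \<subseteq> acc r A"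
      using L(1) S(1) unfolding B_def by blast+
    show "closed_under r s \<delta>" "lt r \<delta> L" if "\<delta> \<in> S" for \<delta>
      using S(1) that L(2) unfolding B_def by blast+
  qed
  moreover have "\<not> finite S"
    using ordLeq_transitive[OF card_of_Plus2 S(2)] infinite_iff_card_of_nat[of S]
    by blast
  ultimately have "|S| \<le>o |traces L|"
    by (rule card_le_square_infinite[rotated])
  moreover have "|traces L| <o |Field \<kappa>|"
    using card_traces_less ordIso_symmetric[OF card_of_Field_ordIso[OF Card_order_\<kappa>]] L(1)
    unfolding B_def by (blast intro: ordLess_ordIso_trans)
  moreover have "|Field \<kappa>| \<le>o |S|"
    using card_of_Plus1 S(2) by (rule ordLeq_transitive)
  ultimately have "|Field \<kappa>| <o |Field \<kappa>|"
    using ordLeq_ordLess_trans ordLeq_transitive by blast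
  then show False
    using ordLess_irreflexive by blast
qed

theorem thread_exists: "\<exists>D. thread r \<C> D"
proof (cases "\<exists>\<beta>0\<in>acc r A. \<exists>x0\<in>traces \<beta>0. \<forall>\<beta>\<in>acc r A. (\<beta>0, \<beta>) \<in> r \<longrightarrow> \<not> splits \<beta>0 x0 \<beta>")
  case True
  then show ?thesis
    using thread_of_non_splitting_node by blast
next
  case False
  then show ?thesis
    using not_splitting_everywhere by blast
qed

end

theorem corollary2p5:
  fixes r :: "'a rel" and \<kappa> :: "'b rel" and \<C> :: "'a \<Rightarrow> 'a set set" and A :: "'a set"
  assumes "Card_order r" and "regularCard r" and "(natLeq, r) \<in> ordLess"
    and "Card_order \<kappa>" and "(\<kappa>, r) \<in> ordLess"
    and "coherent_seq r \<kappa> \<C>"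
    and "A \<subseteq> Field r" and "\<forall>\<gamma>\<in>Field r. \<exists>x\<in>A. lt r \<gamma> x"
    and "\<forall>\<alpha>\<in>A. \<exists>C\<in>\<C> \<alpha>. A \<inter> underS r \<alpha> \<subseteq> C"
  shows "\<exists>D. thread r \<C> D"
proof -
  interpret covered_coherent_seq r \<kappa> \<C> A
    using assms unfolding covered_coherent_seq_def covered_coherent_seq_axioms_def regular_cardinal_def cofinal_iff_lt
    by blast
  show ?thesis
    by (rule thread_exists)
qed

end
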